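(* Let $n\ge 3$ and consider the $C_n$ board (a cycle graph with $n$ vertices and $n$ edges embedded in the plane, with its single bounded cell). Suppose some of its edges are marked with arrows so that no vertex is a sink or a source, and suppose no unmarked edge is markable. Then the number of unmarked (hence unmarkable) edges is even.
   Context: A board is a connected planar graph embedded in the plane together with its bounded cells. Edges may be marked with an arrow pointing in one of the two directions along the edge. A sink is a vertex all of whose incident edges are marked with arrows pointing toward it; a source is a vertex all of whose incident edges are marked with arrows pointing away from it. An unmarked edge is markable if it can be marked with an arrow in at least one direction without creating a sink or a source; an unmarked edge that is not markable is called unmarkable. *)

theory Defs
  imports Main
begin

text \<open>The C_n board: vertices 0..n-1, edges 0..n-1, where edge e joins vertex e
  and vertex (e+1) mod n. A marking assigns to each edge either None (unmarked)
  or Some d: d = True means the arrow points from e to (e+1) mod n,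
  d = False means it points from (e+1) mod n to e.\<close>

type_synonym marking = "nat \<Rightarrow> bool option"

definition incident :: "nat \<Rightarrow> nat \<Rightarrow> nat \<Rightarrow> bool" where
  "incident n e v \<longleftrightarrow> e < n \<and> (v = e \<or> v = Suc e mod n)"

definition points_to :: "nat \<Rightarrow> marking \<Rightarrow> nat \<Rightarrow> nat \<Rightarrow> bool" where
  "points_to n m e v \<longleftrightarrow>
     (m e = Some True \<and> v = Suc e mod n) \<or> (m e = Some False \<and> v = e)"

definition points_from :: "nat \<Rightarrow> marking \<Rightarrow> nat \<Rightarrow> nat \<Rightarrow> bool" where
  "points_from n m e v \<longleftrightarrow>
     (m e = Some True \<and> v = e) \<or> (m e = Some False \<and> v = Suc e mod n)"

definition is_sink :: "nat \<Rightarrow> marking \<Rightarrow> nat \<Rightarrow> bool" where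
  "is_sink n m v \<longleftrightarrow> (\<forall>e. incident n e v \<longrightarrow> points_to n m e v)"

definition is_source :: "nat \<Rightarrow> marking \<Rightarrow> nat \<Rightarrow> bool" where
  "is_source n m v \<longleftrightarrow> (\<forall>e. incident n e v \<longrightarrow> points_from n m e v)"

definition no_sink_source :: "nat \<Rightarrow> marking \<Rightarrow> bool" where
  "no_sink_source n m \<longleftrightarrow> (\<forall>v<n. \<not> is_sink n m v \<and> \<not> is_source n m v)"

definition markable :: "nat \<Rightarrow> marking \<Rightarrow> nat \<Rightarrow> bool" where
  "markable n m e \<longleftrightarrow> e < n \<and> m e = None \<and> (\<exists>d. no_sink_source n (m(e := Some d)))"

end

theory Submission
  imports Defs
begin

text \<open>Two marked edges meeting at a vertex must point the same way around the cycle, while the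
  two neighbours of an unmarkable edge must point opposite ways (otherwise one of the two
  arrows on that edge would be allowed). Walking once around the cycle, the sense of
  orientation therefore flips exactly at the unmarked edges; since it returns to its initial
  value, the number of flips is even.\<close>

definition pred_mod :: "nat \<Rightarrow> nat \<Rightarrow> nat" where
  "pred_mod n e = (e + n - 1) mod n"

definition opposed :: "bool option \<Rightarrow> bool option \<Rightarrow> bool" where
  "opposed a b \<longleftrightarrow> (\<exists>d. a = Some d \<and> b = Some (\<not> d))"

lemma pred_mod_lt: "0 < n \<Longrightarrow> pred_mod n e < n"
  by (simp add: pred_mod_def)

lemma pred_mod_eq: "e < n \<Longrightarrow> pred_mod n e = (if e = 0 then n - 1 else e - 1)"
proof (cases e)
  case (Suc k)
  moreover assume "e < n"
  moreover have "Suc k + n - 1 = k + n" by simp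
  ultimately show ?thesis by (simp add: pred_mod_def)
qed (simp add: pred_mod_def)

lemma pred_mod_Suc_mod: "e < n \<Longrightarrow> pred_mod n (Suc e mod n) = e"
  by (cases "Suc e = n") (simp_all add: pred_mod_eq)

lemma Suc_pred_mod: "e < n \<Longrightarrow> Suc (pred_mod n e) mod n = e"
  by (simp add: pred_mod_eq)

lemma pred_mod_eq_iff: "v < n \<Longrightarrow> e < n \<Longrightarrow> pred_mod n v = e \<longleftrightarrow> v = Suc e mod n"
  using pred_mod_Suc_mod Suc_pred_mod by metis

lemma pred_mod_neq: "2 \<le> n \<Longrightarrow> e < n \<Longrightarrow> pred_mod n e \<noteq> e"
  by (simp add: pred_mod_eq) linarith

lemma Suc_mod_neq: "2 \<le> n \<Longrightarrow> e < n \<Longrightarrow> Suc e mod n \<noteq> e"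
  by (cases "Suc e = n") auto

lemma incident_iff: "v < n \<Longrightarrow> incident n e v \<longleftrightarrow> e = v \<or> e = pred_mod n v"
  unfolding incident_def using pred_mod_eq_iff[of v n e] pred_mod_lt[of n v] by auto

lemma is_sink_iff:
  assumes "2 \<le> n" "v < n"
  shows "is_sink n m v \<longleftrightarrow> m (pred_mod n v) = Some True \<and> m v = Some False"
proof -
  have "is_sink n m v \<longleftrightarrow> points_to n m (pred_mod n v) v \<and> points_to n m v v"
    unfolding is_sink_def incident_iff[OF assms(2)] by blast
  then show ?thesis
    using Suc_mod_neq[OF assms] pred_mod_neq[OF assms] Suc_pred_mod[OF assms(2)]
    unfolding points_to_def by auto
qed

lemma is_source_iff:
  assumes "2 \<le> n" "v < n"
  shows "is_source n m v \<longleftrightarrow> m (pred_mod n v) = Some False \<and> m v = Some True"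
proof -
  have "is_source n m v \<longleftrightarrow> points_from n m (pred_mod n v) v \<and> points_from n m v v"
    unfolding is_source_def incident_iff[OF assms(2)] by blast
  then show ?thesis
    using Suc_mod_neq[OF assms] pred_mod_neq[OF assms] Suc_pred_mod[OF assms(2)]
    unfolding points_from_def by auto
qed

lemma no_sink_source_iff:
  "2 \<le> n \<Longrightarrow> no_sink_source n m \<longleftrightarrow> (\<forall>v<n. \<not> opposed (m (pred_mod n v)) (m v))"
  unfolding no_sink_source_def using is_sink_iff is_source_iff
  by (simp add: opposed_def) (metis (full_types))

lemma unmarkable_neighbours_opposed:
  assumes n: "2 \<le> n" and nss: "no_sink_source n m" and e: "e < n" "m e = None"
    and unmarkable: "\<not> markable n m e"
  shows "opposed (m (pred_mod n e)) (m (Suc e mod n))"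
proof -
  have blocked: "m (pred_mod n e) = Some (\<not> d) \<or> m (Suc e mod n) = Some (\<not> d)" for d
  proof -
    obtain v where v: "v < n" "opposed ((m(e := Some d)) (pred_mod n v)) ((m(e := Some d)) v)"
      using unmarkable e no_sink_source_iff[OF n, of "m(e := Some d)"]
      unfolding markable_def by blast
    have "v = e \<or> pred_mod n v = e"
    proof (rule ccontr)
      assume "\<not> (v = e \<or> pred_mod n v = e)"
      then have "opposed (m (pred_mod n v)) (m v)" using v(2) by simp
      then show False using v(1) nss no_sink_source_iff[OF n] by blast
    qed
    then consider "v = e" | "v = Suc e mod n"
      using pred_mod_eq_iff[OF v(1) e(1)] by blast
    then show ?thesis
    proof cases
      case 1
      then show ?thesis using v(2) pred_mod_neq[OF n e(1)] by (auto simp: opposed_def)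
    next
      case 2
      then show ?thesis
        using v(2) pred_mod_Suc_mod[OF e(1)] Suc_mod_neq[OF n e(1)] by (auto simp: opposed_def)
    qed
  qed
  show ?thesis
    using blocked[of True] blocked[of False] by (auto simp: opposed_def)
qed

text \<open>An unmarked edge takes the sense of its predecessor, which is marked when the edge is
  unmarkable.\<close>

definition heading :: "nat \<Rightarrow> marking \<Rightarrow> nat \<Rightarrow> bool" where
  "heading n m e = (case m e of Some d \<Rightarrow> d | None \<Rightarrow> m (pred_mod n e) = Some True)"

lemma heading_changes_iff_unmarked:
  assumes n: "2 \<le> n" and nss: "no_sink_source n m"
    and unmarkable: "\<forall>e<n. m e = None \<longrightarrow> \<not> markable n m e" and e: "e < n"
  shows "heading n m e \<noteq> heading n m (Suc e mod n) \<longleftrightarrow> m e = None"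
proof (cases "m e")
  case None
  then have "opposed (m (pred_mod n e)) (m (Suc e mod n))"
    using unmarkable_neighbours_opposed[OF n nss e] unmarkable e by blast
  then obtain d where "m (pred_mod n e) = Some d" "m (Suc e mod n) = Some (\<not> d)"
    unfolding opposed_def by blast
  with None show ?thesis by (simp add: heading_def)
next
  case (Some a)
  have "Suc e mod n < n" using e by simp
  then have "\<not> opposed (m (pred_mod n (Suc e mod n))) (m (Suc e mod n))"
    using nss no_sink_source_iff[OF n] by blast
  then have "\<not> opposed (m e) (m (Suc e mod n))"
    by (simp add: pred_mod_Suc_mod[OF e])
  moreover have "heading n m (Suc e mod n) = (m e = Some True)" if "m (Suc e mod n) = None"
    using that by (simp add: heading_def pred_mod_Suc_mod[OF e])
  ultimately show ?thesis
    using Some by (cases "m (Suc e mod n)") (auto simp: heading_def opposed_def)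
qed

lemma even_card_changes_iff:
  "even (card {i. i < k \<and> G i \<noteq> G (Suc i)}) \<longleftrightarrow> G 0 = (G k :: bool)"
proof (induction k)
  case 0
  then show ?case by simp
next
  case (Suc k)
  have "{i. i < Suc k \<and> G i \<noteq> G (Suc i)}
      = (if G k \<noteq> G (Suc k) then insert k else id) {i. i < k \<and> G i \<noteq> G (Suc i)}"
    by (auto simp: less_Suc_eq)
  with Suc.IH show ?case by auto
qed

theorem lemma4p2:
  fixes n :: nat and m :: marking
  assumes "n \<ge> 3"
    and "no_sink_source n m"
    and "\<forall>e<n. m e = None \<longrightarrow> \<not> markable n m e"
  shows "even (card {e. e < n \<and> m e = None})"
proof -
  define G where "G i = heading n m (i mod n)" for i
  have "G i \<noteq> G (Suc i) \<longleftrightarrow> m i = None" if "i < n" for i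
    using heading_changes_iff_unmarked[OF _ assms(2,3) that] assms(1) that
    by (simp add: G_def mod_Suc_eq)
  then have "{e. e < n \<and> m e = None} = {i. i < n \<and> G i \<noteq> G (Suc i)}"
    by blast
  moreover have "G 0 = G n"
    by (simp add: G_def)
  ultimately show ?thesis
    using even_card_changes_iff[of n G] by simp
qed

end
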